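(* Let $f\in L_1(\mathbb{R})$ with $\hat f(t)\ne0$ for all $t\in\mathbb{R}$, and let $\Lambda=\{\lambda_n:n\in\mathbb{N}\}\subseteq\mathbb{R}$ be uniformly discrete. Then $(f_{(\lambda_n)})_{n\in\mathbb{N}}$ is a minimal system in $L_1(\mathbb{R})$ which is not fundamental in $L_1(\mathbb{R})$.
   Context: $\hat f$ is the Fourier transform of $f$. $f_{(\lambda)}(x)=f(x-\lambda)$. $\Lambda$ uniformly discrete: $\inf\{|\lambda-\lambda'|:\lambda\neq\lambda'\in\Lambda\}>0$. A sequence $(x_n)$ in a Banach space is a minimal system if $x_n\notin\overline{\mathrm{span}}\{x_m:m\ne n\}$ for all $n$; fundamental means its closed linear span is the whole space. *)

theory Defs
  imports "HOL-Analysis.Analysis"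
begin

text \<open>Elements of L1(R) are represented by Lebesgue-integrable functions real => complex
  (equality a.e. is handled implicitly: all notions below only use the L1 seminorm).\<close>

definition fourier_transform :: "(real \<Rightarrow> complex) \<Rightarrow> real \<Rightarrow> complex" where
  "fourier_transform f t = integral\<^sup>L lborel (\<lambda>x. f x * cis (- (2 * pi * t * x)))"

definition translate :: "(real \<Rightarrow> complex) \<Rightarrow> real \<Rightarrow> real \<Rightarrow> complex" where
  "translate f lam = (\<lambda>x. f (x - lam))"

definition uniformly_discrete :: "real set \<Rightarrow> bool" where
  "uniformly_discrete L \<longleftrightarrow> (\<exists>\<delta>>0. \<forall>a\<in>L. \<forall>b\<in>L. a \<noteq> b \<longrightarrow> \<delta> \<le> \<bar>a - b\<bar>)"

definition in_L1_closed_span :: "(nat \<Rightarrow> real \<Rightarrow> complex) \<Rightarrow> nat set \<Rightarrow> (real \<Rightarrow> complex) \<Rightarrow> bool" where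
  "in_L1_closed_span xs A g \<longleftrightarrow> integrable lborel g \<and>
     (\<forall>\<epsilon>>0. \<exists>F c. finite F \<and> F \<subseteq> A \<and>
        (\<integral>x. cmod (g x - (\<Sum>n\<in>F. c n * xs n x)) \<partial>lborel) < \<epsilon>)"

definition L1_minimal_system :: "(nat \<Rightarrow> real \<Rightarrow> complex) \<Rightarrow> bool" where
  "L1_minimal_system xs \<longleftrightarrow> (\<forall>n. \<not> in_L1_closed_span xs (UNIV - {n}) (xs n))"

definition L1_fundamental :: "(nat \<Rightarrow> real \<Rightarrow> complex) \<Rightarrow> bool" where
  "L1_fundamental xs \<longleftrightarrow> (\<forall>g. integrable lborel g \<longrightarrow> in_L1_closed_span xs UNIV g)"

end

theory Submission
  imports Defs
begin

(* If f(x - \<mu>) were L1-close to a combination \<Sum> c\<^sub>m f(x - \<lambda>\<^sub>m), taking Fourier transforms would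
   make |f^(t)| |P(t)| small for every t, where P(t) = e^(-2\<pi>it\<mu>) - \<Sum> c\<^sub>m e^(-2\<pi>it\<lambda>\<^sub>m).
   As f^ is continuous and never zero, it is bounded below on [-1/\<delta>, 1/\<delta>]. An Ingham-type inequality
   shows that |P| exceeds 1/2 somewhere there: integrate |P|\<^sup>2 against the triangle function of
   half-width R, whose Fourier transform is R at 0 and O(1/(b\<^sup>2R)) elsewhere; for \<delta>-separated
   frequencies the off-diagonal terms sum like \<Sum>\<^sub>k 1/(k\<delta>)\<^sup>2 and the diagonal dominates.
   Minimality is the case \<mu> = \<lambda>\<^sub>n; non-fundamentality the case \<mu> = \<lambda>\<^sub>0 + \<delta>/2, which keeps all
   frequencies \<delta>/2-separated. *)

section \<open>Fourier transforms of translates\<close>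

definition trig_poly :: "real set \<Rightarrow> (real \<Rightarrow> complex) \<Rightarrow> real \<Rightarrow> complex" where
  "trig_poly S a t = (\<Sum>\<nu>\<in>S. a \<nu> * cis (- (2 * pi * t * \<nu>)))"

lemma isCont_fourier_transform:
  assumes f: "integrable lborel f"
  shows "isCont (fourier_transform f) t"
  unfolding continuous_at_sequentially comp_def fourier_transform_def
proof safe
  fix X assume X: "X \<longlonglongrightarrow> t"
  have [measurable]: "f \<in> borel_measurable borel"
    using borel_measurable_integrable[OF f] by simp
  show "(\<lambda>n. \<integral>x. f x * cis (- (2 * pi * X n * x)) \<partial>lborel) \<longlonglongrightarrow> \<integral>x. f x * cis (- (2 * pi * t * x)) \<partial>lborel"
  proof (rule integral_dominated_convergence[where w="\<lambda>x. norm (f x)"])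
    show "AE x in lborel. (\<lambda>n. f x * cis (- (2 * pi * X n * x))) \<longlonglongrightarrow> f x * cis (- (2 * pi * t * x))"
      by (intro AE_I2 tendsto_intros X)
  qed (use f in \<open>auto simp: norm_mult cis_conv_exp\<close>)
qed

lemma integrable_translate:
  "integrable lborel f \<Longrightarrow> integrable lborel (translate f s)"
  using lborel_integrable_real_affine[of f 1 "-s"] unfolding translate_def by simp

lemma fourier_transform_translate:
  "fourier_transform (translate f s) t = cis (- (2 * pi * t * s)) * fourier_transform f t"
proof -
  have "fourier_transform (translate f s) t
      = (\<integral>x. translate f s (s + 1 * x) * cis (- (2 * pi * t * (s + 1 * x))) \<partial>lborel)"
    unfolding fourier_transform_def
    using lborel_integral_real_affine[of 1 _ s] by simp
  also have "\<dots> = (\<integral>x. cis (- (2 * pi * t * s)) * (f x * cis (- (2 * pi * t * x))) \<partial>lborel)"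
  proof -
    have "cis (- (2 * pi * t * (s + 1 * x))) = cis (- (2 * pi * t * s)) * cis (- (2 * pi * t * x))" for x
      by (simp add: cis_mult algebra_simps)
    then show ?thesis
      by (simp add: translate_def mult_ac)
  qed
  finally show ?thesis
    unfolding fourier_transform_def by simp
qed

lemma fourier_transform_sum_translates:
  assumes f: "integrable lborel f" and S: "finite S"
  shows "fourier_transform (\<lambda>x. \<Sum>\<nu>\<in>S. a \<nu> * translate f \<nu> x) t = fourier_transform f t * trig_poly S a t"
proof -
  have [measurable]: "f \<in> borel_measurable borel"
    using borel_measurable_integrable[OF f] by simp
  have int: "integrable lborel (\<lambda>x. translate f \<nu> x * cis (- (2 * pi * t * x)))" for \<nu>
    by (rule Bochner_Integration.integrable_bound[OF integrable_norm[OF integrable_translate[OF f]]])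
       (auto simp: norm_mult cis_conv_exp translate_def)
  have "fourier_transform (\<lambda>x. \<Sum>\<nu>\<in>S. a \<nu> * translate f \<nu> x) t
      = (\<integral>x. (\<Sum>\<nu>\<in>S. a \<nu> * (translate f \<nu> x * cis (- (2 * pi * t * x)))) \<partial>lborel)"
    unfolding fourier_transform_def by (simp add: sum_distrib_right mult.assoc)
  also have "\<dots> = (\<Sum>\<nu>\<in>S. a \<nu> * fourier_transform (translate f \<nu>) t)"
    using int unfolding fourier_transform_def by (simp add: Bochner_Integration.integral_sum)
  finally show ?thesis
    by (simp add: fourier_transform_translate trig_poly_def sum_distrib_left mult_ac)
qed

lemma norm_fourier_transform_le: "cmod (fourier_transform g t) \<le> (\<integral>x. cmod (g x) \<partial>lborel)"
  unfolding fourier_transform_def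
  by (rule order_trans[OF integral_norm_bound]) (simp add: norm_mult)

section \<open>Separated sets of frequencies\<close>

definition separated :: "real \<Rightarrow> real set \<Rightarrow> bool" where
  "separated \<delta> L \<longleftrightarrow> (\<forall>a\<in>L. \<forall>b\<in>L. a \<noteq> b \<longrightarrow> \<delta> \<le> \<bar>a - b\<bar>)"

lemma uniformly_discrete_iff_separated: "uniformly_discrete L \<longleftrightarrow> (\<exists>\<delta>>0. separated \<delta> L)"
  unfolding uniformly_discrete_def separated_def ..

lemma separated_subset: "separated \<delta> L \<Longrightarrow> M \<subseteq> L \<Longrightarrow> separated \<delta> M"
  unfolding separated_def by blast

lemma separated_insert:
  assumes "separated \<delta> L" "\<delta>' \<le> \<delta>" "\<And>x. x \<in> L \<Longrightarrow> \<delta>' \<le> \<bar>x - \<mu>\<bar>"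
  shows "separated \<delta>' (insert \<mu> L)"
  using assms unfolding separated_def by (force simp: abs_minus_commute)

lemma separated_insert_offset:
  assumes L: "separated \<delta> L" and \<delta>: "\<delta> > 0" and x: "x \<in> L"
  shows "separated (\<delta> / 2) (insert (x + \<delta> / 2) L)" "x + \<delta> / 2 \<notin> L"
proof -
  have far: "\<delta> / 2 \<le> \<bar>y - (x + \<delta> / 2)\<bar>" if y: "y \<in> L" for y
  proof (cases "y = x")
    case False
    then have "\<delta> \<le> \<bar>y - x\<bar>"
      using L x y by (simp add: separated_def)
    then show ?thesis
      by linarith
  qed (use \<delta> in simp)
  then show "separated (\<delta> / 2) (insert (x + \<delta> / 2) L)"
    using L \<delta> by (intro separated_insert) auto
  show "x + \<delta> / 2 \<notin> L"
    using far[of "x + \<delta> / 2"] \<delta> by auto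
qed

lemma sum_inverse_squares_le:
  assumes "finite B" "B \<subseteq> {1..}"
  shows "(\<Sum>k\<in>B. 1 / (real k)\<^sup>2) \<le> pi\<^sup>2 / 6"
proof -
  have "(\<Sum>k\<in>B. 1 / (real k)\<^sup>2) = (\<Sum>n\<in>(\<lambda>k. k - 1) ` B. 1 / (1 + real n)\<^sup>2)"
    using assms by (intro sum.reindex_bij_witness[of _ Suc "\<lambda>k. k - 1"]) (auto simp: subset_eq of_nat_diff)
  also have "\<dots> \<le> (\<Sum>n. 1 / (1 + real n)\<^sup>2)"
    using assms inverse_squares_sums by (intro sum_le_suminf) (auto simp: sums_iff)
  finally show ?thesis
    using inverse_squares_sums by (simp add: sums_iff)
qed

lemma separated_sum_inverse_squares_pos:
  assumes \<delta>: "\<delta> > 0" and A: "finite A" "separated \<delta> A" and ge: "\<And>a. a \<in> A \<Longrightarrow> \<delta> \<le> a"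
  shows "(\<Sum>a\<in>A. 1 / a\<^sup>2) \<le> pi\<^sup>2 / (6 * \<delta>\<^sup>2)"
proof -
  define k where "k a = nat \<lfloor>a / \<delta>\<rfloor>" for a
  have k: "1 \<le> k a" "real (k a) * \<delta> \<le> a" if "a \<in> A" for a
  proof -
    have "1 \<le> a / \<delta>" using ge[OF that] \<delta> by (simp add: le_divide_eq)
    then show "1 \<le> k a" "real (k a) * \<delta> \<le> a"
      using \<delta> unfolding k_def by (simp_all add: le_nat_iff le_floor_iff pos_le_divide_eq [symmetric])
  qed
  have "inj_on k A"
  proof (rule inj_onI, rule ccontr)
    fix a b assume ab: "a \<in> A" "b \<in> A" "k a = k b" "a \<noteq> b"
    then have "\<delta> \<le> \<bar>a - b\<bar>" using A(2) by (auto simp: separated_def)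
    then have "1 \<le> \<bar>a / \<delta> - b / \<delta>\<bar>"
      using \<delta> by (simp add: diff_divide_distrib[symmetric] le_divide_eq)
    moreover have "\<lfloor>a / \<delta>\<rfloor> = \<lfloor>b / \<delta>\<rfloor>"
      using ab(3) k(1)[OF ab(1)] k(1)[OF ab(2)] unfolding k_def by simp
    ultimately show False by linarith
  qed
  have "(\<Sum>a\<in>A. 1 / a\<^sup>2) \<le> (\<Sum>a\<in>A. 1 / \<delta>\<^sup>2 * (1 / (real (k a))\<^sup>2))"
  proof (rule sum_mono)
    fix a assume a: "a \<in> A"
    have "(real (k a) * \<delta>)\<^sup>2 \<le> a\<^sup>2"
      using k[OF a] \<delta> by (intro power_mono) auto
    then show "1 / a\<^sup>2 \<le> 1 / \<delta>\<^sup>2 * (1 / (real (k a))\<^sup>2)"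
      using k(1)[OF a] \<delta> by (simp add: frac_le power_mult_distrib mult.commute)
  qed
  also have "\<dots> = 1 / \<delta>\<^sup>2 * (\<Sum>j\<in>k ` A. 1 / (real j)\<^sup>2)"
    by (simp add: sum_distrib_left sum.reindex[OF \<open>inj_on k A\<close>])
  also have "\<dots> \<le> 1 / \<delta>\<^sup>2 * (pi\<^sup>2 / 6)"
    using k(1) A by (intro mult_left_mono sum_inverse_squares_le) force+
  finally show ?thesis by simp
qed

lemma separated_sum_inverse_squares:
  assumes \<delta>: "\<delta> > 0" and S: "finite S" "separated \<delta> S" and far: "\<And>x. x \<in> S \<Longrightarrow> \<delta> \<le> \<bar>x - \<nu>\<bar>"
  shows "(\<Sum>x\<in>S. 1 / (x - \<nu>)\<^sup>2) \<le> pi\<^sup>2 / (3 * \<delta>\<^sup>2)"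
proof -
  define P N where "P = {x\<in>S. \<nu> < x}" and "N = {x\<in>S. x < \<nu>}"
  have SPN: "S = P \<union> N" "P \<inter> N = {}" "finite P" "finite N"
    using far \<delta> S(1) unfolding P_def N_def by force+
  have "(\<Sum>x\<in>P. 1 / (x - \<nu>)\<^sup>2) = (\<Sum>a\<in>(\<lambda>x. x - \<nu>) ` P. 1 / a\<^sup>2)"
    by (simp add: sum.reindex inj_on_def)
  also have "\<dots> \<le> pi\<^sup>2 / (6 * \<delta>\<^sup>2)"
    using far S(2) SPN unfolding P_def
    by (intro separated_sum_inverse_squares_pos \<delta>) (auto simp: separated_def dest!: far)
  finally have pos: "(\<Sum>x\<in>P. 1 / (x - \<nu>)\<^sup>2) \<le> pi\<^sup>2 / (6 * \<delta>\<^sup>2)" .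
  have "(\<Sum>x\<in>N. 1 / (x - \<nu>)\<^sup>2) = (\<Sum>a\<in>(\<lambda>x. \<nu> - x) ` N. 1 / a\<^sup>2)"
    by (simp add: sum.reindex inj_on_def power2_commute)
  also have "\<dots> \<le> pi\<^sup>2 / (6 * \<delta>\<^sup>2)"
    using far S(2) SPN unfolding N_def
    by (intro separated_sum_inverse_squares_pos \<delta>) (auto simp: separated_def abs_minus_commute dest!: far)
  finally have neg: "(\<Sum>x\<in>N. 1 / (x - \<nu>)\<^sup>2) \<le> pi\<^sup>2 / (6 * \<delta>\<^sup>2)" .
  show ?thesis
    using pos neg by (simp add: SPN sum.union_disjoint)
qed

section \<open>The triangle kernel\<close>

lemma has_integral_even_symmetric:
  fixes f :: "real \<Rightarrow> real"
  assumes "(f has_integral i) {0..R}" "0 \<le> R" "\<And>x. f (- x) = f x"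
  shows "(f has_integral 2 * i) {-R..R}"
proof -
  have "((\<lambda>x. f (- x)) has_integral i) {-R..-0}"
    using assms(1) by (rule iffD2[OF has_integral_reflect_real])
  then have "(f has_integral i) {-R..0}"
    using assms(3) by simp
  then show ?thesis
    using has_integral_combine[of "-R" 0 R f i i] assms(1,2) by simp
qed

lemma has_integral_odd_symmetric:
  fixes f :: "real \<Rightarrow> real"
  assumes "f integrable_on {0..R}" "0 \<le> R" "\<And>x. f (- x) = - f x"
  shows "(f has_integral 0) {-R..R}"
proof -
  obtain i where i: "(f has_integral i) {0..R}"
    using assms(1) by blast
  have "((\<lambda>x. - f x) has_integral - i) {0..R}"
    using has_integral_neg[OF i] .
  then have "((\<lambda>x. - f (- x)) has_integral - i) {-R..-0}"
    by (rule iffD2[OF has_integral_reflect_real])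
  then have "(f has_integral - i) {-R..0}"
    using assms(3) by simp
  then show ?thesis
    using has_integral_combine[of "-R" 0 R f "- i" i] i assms(2) by simp
qed

definition triangle :: "real \<Rightarrow> real \<Rightarrow> real" where
  "triangle R t = 1 - \<bar>t\<bar> / R"

definition triangle_ft :: "real \<Rightarrow> real \<Rightarrow> real" where
  "triangle_ft R b = (if b = 0 then R else 2 * (1 - cos (b * R)) / (b\<^sup>2 * R))"

lemma triangle_cos_has_integral:
  assumes R: "R > 0"
  shows "((\<lambda>t. triangle R t * cos (b * t)) has_integral triangle_ft R b) {-R..R}"
proof (rule has_integral_even_symmetric[where i = "triangle_ft R b / 2", simplified])
  define F where "F t = (if b = 0 then t - t\<^sup>2 / (2 * R)
    else (1 - t / R) * sin (b * t) / b - cos (b * t) / (b\<^sup>2 * R))" for t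
  have "(F has_real_derivative triangle R t * cos (b * t)) (at t within {0..R})"
    if "t \<in> {0..R}" for t
    using R that unfolding F_def triangle_def
    by (cases "b = 0") (auto intro!: derivative_eq_intros simp: field_simps power2_eq_square)
  then have "((\<lambda>t. triangle R t * cos (b * t)) has_integral F R - F 0) {0..R}"
    using R by (intro fundamental_theorem_of_calculus) (auto simp: has_real_derivative_iff_has_vector_derivative)
  moreover have "F R - F 0 = triangle_ft R b / 2"
    using R by (simp add: F_def triangle_ft_def field_simps power2_eq_square)
  ultimately show "((\<lambda>t. triangle R t * cos (b * t)) has_integral triangle_ft R b / 2) {0..R}"
    by simp
qed (use R in \<open>auto simp: triangle_def\<close>)

lemma triangle_sin_has_integral:
  assumes R: "R > 0"
  shows "((\<lambda>t. triangle R t * sin (b * t)) has_integral 0) {-R..R}"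
  using R unfolding triangle_def
  by (intro has_integral_odd_symmetric integrable_continuous_real continuous_intros) auto

lemma triangle_cis_has_integral:
  assumes R: "R > 0"
  shows "((\<lambda>t. complex_of_real (triangle R t) * cis (b * t)) has_integral complex_of_real (triangle_ft R b)) {-R..R}"
proof -
  have "((\<lambda>t. complex_of_real (triangle R t * cos (b * t)) + \<i> * complex_of_real (triangle R t * sin (b * t)))
        has_integral (complex_of_real (triangle_ft R b) + \<i> * complex_of_real 0)) {-R..R}"
    by (intro has_integral_add has_integral_mult_right has_integral_of_real
        triangle_cos_has_integral triangle_sin_has_integral R)
  moreover have "complex_of_real (triangle R t * cos (b * t)) + \<i> * complex_of_real (triangle R t * sin (b * t))
      = complex_of_real (triangle R t) * cis (b * t)" for t
    by (simp add: complex_eq_iff)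
  ultimately show ?thesis
    by simp
qed

lemma triangle_ft_minus: "triangle_ft R (- b) = triangle_ft R b"
  by (simp add: triangle_ft_def)

lemma abs_triangle_ft_le:
  assumes "R > 0" "b \<noteq> 0"
  shows "\<bar>triangle_ft R b\<bar> \<le> 4 / (b\<^sup>2 * R)"
proof -
  have "0 \<le> 1 - cos (b * R)"
    by simp
  moreover have "2 * (1 - cos (b * R)) \<le> 4"
    using cos_ge_minus_one[of "b * R"] by argo
  ultimately have "\<bar>triangle_ft R b\<bar> = 2 * (1 - cos (b * R)) / (b\<^sup>2 * R)"
    using assms by (simp add: triangle_ft_def)
  also have "\<dots> \<le> 4 / (b\<^sup>2 * R)"
    using assms by (intro divide_right_mono[OF \<open>2 * (1 - cos (b * R)) \<le> 4\<close>]) simp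
  finally show ?thesis .
qed

section \<open>An Ingham-type inequality\<close>

lemma schur_test:
  fixes n :: "'a \<Rightarrow> real" and M :: "'a \<Rightarrow> 'a \<Rightarrow> real"
  assumes S: "finite S"
    and nonneg: "\<And>x y. x \<in> S \<Longrightarrow> y \<in> S \<Longrightarrow> 0 \<le> M x y"
    and sym: "\<And>x y. x \<in> S \<Longrightarrow> y \<in> S \<Longrightarrow> M x y = M y x"
    and row: "\<And>x. x \<in> S \<Longrightarrow> (\<Sum>y\<in>S. M x y) \<le> B"
  shows "(\<Sum>x\<in>S. \<Sum>y\<in>S. n x * n y * M x y) \<le> B * (\<Sum>x\<in>S. (n x)\<^sup>2)"
proof -
  have "(\<Sum>x\<in>S. \<Sum>y\<in>S. n x * n y * M x y)
      \<le> (\<Sum>x\<in>S. \<Sum>y\<in>S. ((n x)\<^sup>2 * M x y + (n y)\<^sup>2 * M x y) / 2)"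
  proof (intro sum_mono)
    fix x y assume "x \<in> S" "y \<in> S"
    then show "n x * n y * M x y \<le> ((n x)\<^sup>2 * M x y + (n y)\<^sup>2 * M x y) / 2"
      using mult_right_mono[OF sum_squares_bound[of "n x" "n y"] nonneg] by (simp add: algebra_simps)
  qed
  also have "\<dots> = ((\<Sum>x\<in>S. \<Sum>y\<in>S. (n x)\<^sup>2 * M x y) + (\<Sum>x\<in>S. \<Sum>y\<in>S. (n y)\<^sup>2 * M x y)) / 2"
    by (simp only: sum_divide_distrib[symmetric] sum.distrib)
  also have "(\<Sum>x\<in>S. \<Sum>y\<in>S. (n y)\<^sup>2 * M x y) = (\<Sum>x\<in>S. \<Sum>y\<in>S. (n x)\<^sup>2 * M x y)"
    by (subst sum.swap) (simp add: sym cong: sum.cong)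
  also have "((\<Sum>x\<in>S. \<Sum>y\<in>S. (n x)\<^sup>2 * M x y) + (\<Sum>x\<in>S. \<Sum>y\<in>S. (n x)\<^sup>2 * M x y)) / 2
      = (\<Sum>x\<in>S. \<Sum>y\<in>S. (n x)\<^sup>2 * M x y)"
    by simp
  also have "\<dots> = (\<Sum>x\<in>S. (n x)\<^sup>2 * (\<Sum>y\<in>S. M x y))"
    by (simp add: sum_distrib_left)
  also have "\<dots> \<le> (\<Sum>x\<in>S. (n x)\<^sup>2 * B)"
    using row by (intro sum_mono mult_left_mono) auto
  finally show ?thesis
    by (simp add: sum_distrib_left mult.commute)
qed

lemma hermitian_form_lower_bound:
  fixes W :: "'a \<Rightarrow> 'a \<Rightarrow> real" and a :: "'a \<Rightarrow> complex"
  assumes S: "finite S" and diag: "\<And>x. x \<in> S \<Longrightarrow> W x x = R"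
    and sym: "\<And>x y. x \<in> S \<Longrightarrow> y \<in> S \<Longrightarrow> W x y = W y x"
    and row: "\<And>x. x \<in> S \<Longrightarrow> (\<Sum>y\<in>S - {x}. \<bar>W x y\<bar>) \<le> B"
  shows "(R - B) * (\<Sum>x\<in>S. (cmod (a x))\<^sup>2) \<le> Re (\<Sum>x\<in>S. \<Sum>y\<in>S. a x * cnj (a y) * W x y)"
proof -
  define M where "M x y = (if x = y then 0 else \<bar>W x y\<bar>)" for x y
  have entry: "(if x = y then R * (cmod (a x))\<^sup>2 else 0) - cmod (a x) * cmod (a y) * M x y
      \<le> Re (a x * cnj (a y) * W x y)" if "x \<in> S" for x y
  proof (cases "x = y")
    case True
    then show ?thesis
      using diag[OF that] by (simp add: M_def flip: complex_norm_square of_real_mult)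
  next
    case False
    then show ?thesis
      using abs_Re_le_cmod[of "a x * cnj (a y) * W x y"] by (simp add: M_def norm_mult)
  qed
  have "R * (\<Sum>x\<in>S. (cmod (a x))\<^sup>2) - (\<Sum>x\<in>S. \<Sum>y\<in>S. cmod (a x) * cmod (a y) * M x y)
      = (\<Sum>x\<in>S. \<Sum>y\<in>S. (if x = y then R * (cmod (a x))\<^sup>2 else 0) - cmod (a x) * cmod (a y) * M x y)"
    using S by (simp add: sum_subtractf sum_distrib_left)
  also have "\<dots> \<le> Re (\<Sum>x\<in>S. \<Sum>y\<in>S. a x * cnj (a y) * W x y)"
    unfolding Re_sum using entry by (intro sum_mono) auto
  finally have "R * (\<Sum>x\<in>S. (cmod (a x))\<^sup>2) - (\<Sum>x\<in>S. \<Sum>y\<in>S. cmod (a x) * cmod (a y) * M x y)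
      \<le> Re (\<Sum>x\<in>S. \<Sum>y\<in>S. a x * cnj (a y) * W x y)" .
  moreover have "(\<Sum>x\<in>S. \<Sum>y\<in>S. cmod (a x) * cmod (a y) * M x y) \<le> B * (\<Sum>x\<in>S. (cmod (a x))\<^sup>2)"
  proof (rule schur_test[OF S])
    fix x assume x: "x \<in> S"
    have "(\<Sum>y\<in>S. M x y) = M x x + (\<Sum>y\<in>S - {x}. M x y)"
      by (rule sum.remove[OF S x])
    also have "\<dots> = (\<Sum>y\<in>S - {x}. M x y)"
      by (simp add: M_def)
    also have "\<dots> = (\<Sum>y\<in>S - {x}. \<bar>W x y\<bar>)"
      by (rule sum.cong) (auto simp: M_def)
    finally show "(\<Sum>y\<in>S. M x y) \<le> B"
      using row[OF x] by simp
  qed (auto simp: M_def sym)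
  ultimately show ?thesis
    by (simp add: algebra_simps)
qed

lemma triangle_trig_poly_has_integral:
  assumes R: "R > 0" and S: "finite S"
  shows "((\<lambda>t. complex_of_real (triangle R t * (cmod (trig_poly S a t))\<^sup>2))
     has_integral (\<Sum>\<nu>\<in>S. \<Sum>\<nu>'\<in>S. a \<nu> * cnj (a \<nu>') * triangle_ft R (2 * pi * (\<nu>' - \<nu>)))) {-R..R}"
proof -
  have "complex_of_real (triangle R t * (cmod (trig_poly S a t))\<^sup>2)
     = (\<Sum>\<nu>\<in>S. \<Sum>\<nu>'\<in>S. a \<nu> * cnj (a \<nu>') * (complex_of_real (triangle R t) * cis (2 * pi * (\<nu>' - \<nu>) * t)))" for t
  proof -
    have "complex_of_real ((cmod (trig_poly S a t))\<^sup>2) = trig_poly S a t * cnj (trig_poly S a t)"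
      by (rule complex_norm_square)
    also have "\<dots> = (\<Sum>\<nu>\<in>S. \<Sum>\<nu>'\<in>S. a \<nu> * cis (- (2 * pi * t * \<nu>)) * (cnj (a \<nu>') * cis (2 * pi * t * \<nu>')))"
      unfolding trig_poly_def by (simp add: cnj_sum sum_product cis_cnj)
    also have "\<dots> = (\<Sum>\<nu>\<in>S. \<Sum>\<nu>'\<in>S. a \<nu> * cnj (a \<nu>') * cis (2 * pi * (\<nu>' - \<nu>) * t))"
      by (intro sum.cong refl) (simp add: cis_mult algebra_simps)
    finally show ?thesis
      by (simp add: sum_distrib_left mult_ac)
  qed
  moreover have "((\<lambda>t. \<Sum>\<nu>\<in>S. \<Sum>\<nu>'\<in>S. a \<nu> * cnj (a \<nu>') * (complex_of_real (triangle R t) * cis (2 * pi * (\<nu>' - \<nu>) * t)))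
     has_integral (\<Sum>\<nu>\<in>S. \<Sum>\<nu>'\<in>S. a \<nu> * cnj (a \<nu>') * triangle_ft R (2 * pi * (\<nu>' - \<nu>)))) {-R..R}"
    by (intro has_integral_sum S has_integral_mult_right triangle_cis_has_integral R)
  ultimately show ?thesis
    by simp
qed

lemma triangle_ft_off_diagonal_sum_le:
  assumes \<delta>: "\<delta> > 0" and R: "R > 0" and S: "finite S" "separated \<delta> S" and \<nu>: "\<nu> \<in> S"
  shows "(\<Sum>\<nu>'\<in>S - {\<nu>}. \<bar>triangle_ft R (2 * pi * (\<nu>' - \<nu>))\<bar>) \<le> 1 / (3 * R * \<delta>\<^sup>2)"
proof -
  have "(\<Sum>\<nu>'\<in>S - {\<nu>}. \<bar>triangle_ft R (2 * pi * (\<nu>' - \<nu>))\<bar>)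
      \<le> (\<Sum>\<nu>'\<in>S - {\<nu>}. 1 / (pi\<^sup>2 * R) * (1 / (\<nu>' - \<nu>)\<^sup>2))"
  proof (rule sum_mono)
    fix \<nu>' assume "\<nu>' \<in> S - {\<nu>}"
    then have "\<nu>' - \<nu> \<noteq> 0"
      by auto
    then have "\<bar>triangle_ft R (2 * pi * (\<nu>' - \<nu>))\<bar> \<le> 4 / ((2 * pi * (\<nu>' - \<nu>))\<^sup>2 * R)"
      by (intro abs_triangle_ft_le R) simp
    also have "\<dots> = 1 / (pi\<^sup>2 * R) * (1 / (\<nu>' - \<nu>)\<^sup>2)"
      using \<open>\<nu>' - \<nu> \<noteq> 0\<close> R unfolding power_mult_distrib by (simp add: field_simps)
    finally show "\<bar>triangle_ft R (2 * pi * (\<nu>' - \<nu>))\<bar> \<le> 1 / (pi\<^sup>2 * R) * (1 / (\<nu>' - \<nu>)\<^sup>2)" .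
  qed
  also have "\<dots> = 1 / (pi\<^sup>2 * R) * (\<Sum>\<nu>'\<in>S - {\<nu>}. 1 / (\<nu>' - \<nu>)\<^sup>2)"
    by (simp add: sum_distrib_left)
  also have "\<dots> \<le> 1 / (pi\<^sup>2 * R) * (pi\<^sup>2 / (3 * \<delta>\<^sup>2))"
    using S \<nu> R by (intro mult_left_mono separated_sum_inverse_squares \<delta>)
      (auto simp: separated_def intro: separated_subset)
  also have "\<dots> = 1 / (3 * R * \<delta>\<^sup>2)"
    by simp
  finally show ?thesis .
qed

lemma ingham_lower_bound:
  assumes \<delta>: "\<delta> > 0" and R: "R > 0" and S: "finite S" "separated \<delta> S"
  shows "(R - 1 / (3 * R * \<delta>\<^sup>2)) * (\<Sum>\<nu>\<in>S. (cmod (a \<nu>))\<^sup>2)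
    \<le> integral {-R..R} (\<lambda>t. triangle R t * (cmod (trig_poly S a t))\<^sup>2)"
proof -
  define W where "W \<nu> \<nu>' = triangle_ft R (2 * pi * (\<nu>' - \<nu>))" for \<nu> \<nu>'
  have "((\<lambda>t. triangle R t * (cmod (trig_poly S a t))\<^sup>2)
      has_integral Re (\<Sum>\<nu>\<in>S. \<Sum>\<nu>'\<in>S. a \<nu> * cnj (a \<nu>') * W \<nu> \<nu>')) {-R..R}"
    using has_integral_Re[OF triangle_trig_poly_has_integral[OF R S(1)]] unfolding W_def by simp
  moreover have "(R - 1 / (3 * R * \<delta>\<^sup>2)) * (\<Sum>\<nu>\<in>S. (cmod (a \<nu>))\<^sup>2)
      \<le> Re (\<Sum>\<nu>\<in>S. \<Sum>\<nu>'\<in>S. a \<nu> * cnj (a \<nu>') * W \<nu> \<nu>')"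
  proof (rule hermitian_form_lower_bound[OF S(1)])
    show "W \<nu> \<nu>' = W \<nu>' \<nu>" for \<nu> \<nu>'
      using triangle_ft_minus[of R "2 * pi * (\<nu>' - \<nu>)"] by (simp add: W_def algebra_simps)
  qed (use triangle_ft_off_diagonal_sum_le[OF \<delta> R S] in \<open>auto simp: W_def triangle_ft_def\<close>)
  ultimately show ?thesis
    by (simp add: integral_unique)
qed

lemma ex_trig_poly_gt_half:
  assumes \<delta>: "\<delta> > 0" and S: "finite S" "separated \<delta> S" and \<mu>: "\<mu> \<in> S" "a \<mu> = 1"
  shows "\<exists>t\<in>{-1/\<delta>..1/\<delta>}. 1/2 < cmod (trig_poly S a t)"
proof (rule ccontr)
  define R where "R = 1 / \<delta>"
  have R: "R > 0"
    using \<delta> by (simp add: R_def)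
  assume "\<not> ?thesis"
  then have small: "cmod (trig_poly S a t) \<le> 1/2" if "t \<in> {-R..R}" for t
    using that unfolding R_def by force
  have "continuous_on {-R..R} (\<lambda>t. triangle R t * (cmod (trig_poly S a t))\<^sup>2)"
    unfolding triangle_def trig_poly_def using R by (intro continuous_intros) auto
  then have "integral {-R..R} (\<lambda>t. triangle R t * (cmod (trig_poly S a t))\<^sup>2)
      \<le> integral {-R..R} (\<lambda>t. 1/4)"
  proof (intro integral_le integrable_continuous_real)
    fix t :: real assume t: "t \<in> {-R..R}"
    have "triangle R t * (cmod (trig_poly S a t))\<^sup>2 \<le> 1 * (1/2)\<^sup>2"
      using t R small[OF t] by (intro mult_mono power_mono) (auto simp: triangle_def field_simps)
    then show "triangle R t * (cmod (trig_poly S a t))\<^sup>2 \<le> 1/4"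
      by (simp add: power2_eq_square)
  qed auto
  also have "\<dots> = R / 2"
    using R by simp
  finally have upper: "integral {-R..R} (\<lambda>t. triangle R t * (cmod (trig_poly S a t))\<^sup>2) \<le> R / 2" .
  have "2 * R / 3 \<le> (R - 1 / (3 * R * \<delta>\<^sup>2)) * 1"
    using \<delta> by (simp add: R_def field_simps power2_eq_square)
  also have "\<dots> \<le> (R - 1 / (3 * R * \<delta>\<^sup>2)) * (\<Sum>\<nu>\<in>S. (cmod (a \<nu>))\<^sup>2)"
    using member_le_sum[of \<mu> S "\<lambda>\<nu>. (cmod (a \<nu>))\<^sup>2"] S \<mu> \<delta>
    by (intro mult_left_mono) (auto simp: R_def field_simps power2_eq_square)
  also have "\<dots> \<le> integral {-R..R} (\<lambda>t. triangle R t * (cmod (trig_poly S a t))\<^sup>2)"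
    by (rule ingham_lower_bound[OF \<delta> R S])
  finally show False
    using upper R by simp
qed

lemma sum_insert_image_coefficients:
  fixes \<phi> :: "real \<Rightarrow> 'a::comm_ring_1"
  assumes "finite F" "inj_on lam F" "\<mu> \<notin> lam ` F"
  shows "(\<Sum>\<nu>\<in>insert \<mu> (lam ` F). (if \<nu> = \<mu> then 1 else - c (inv_into F lam \<nu>)) * \<phi> \<nu>)
    = \<phi> \<mu> - (\<Sum>m\<in>F. c m * \<phi> (lam m))"
proof -
  have "(\<Sum>\<nu>\<in>lam ` F. (if \<nu> = \<mu> then 1 else - c (inv_into F lam \<nu>)) * \<phi> \<nu>)
      = (\<Sum>m\<in>F. (if lam m = \<mu> then 1 else - c (inv_into F lam (lam m))) * \<phi> (lam m))"
    by (rule sum.reindex[OF assms(2), unfolded comp_def])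
  also have "\<dots> = (\<Sum>m\<in>F. - (c m * \<phi> (lam m)))"
    using assms(2,3) by (intro sum.cong refl) auto
  finally show ?thesis
    using assms(1,3) by (simp add: sum_negf)
qed

lemma not_in_L1_closed_span_translates:
  fixes f :: "real \<Rightarrow> complex" and lam :: "nat \<Rightarrow> real"
  assumes f: "integrable lborel f" and ft: "\<And>t. fourier_transform f t \<noteq> 0"
    and lam: "inj_on lam A" "\<mu> \<notin> lam ` A"
    and \<delta>: "\<delta> > 0" "separated \<delta> (insert \<mu> (lam ` A))"
  shows "\<not> in_L1_closed_span (\<lambda>n. translate f (lam n)) A (translate f \<mu>)"
proof
  assume span: "in_L1_closed_span (\<lambda>n. translate f (lam n)) A (translate f \<mu>)"
  have "continuous_on {-1/\<delta>..1/\<delta>} (\<lambda>t. cmod (fourier_transform f t))"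
    by (intro continuous_at_imp_continuous_on ballI continuous_intros isCont_fourier_transform f)
  moreover have "{-1/\<delta>..1/\<delta>} \<noteq> {}"
    using \<delta>(1) by simp
  ultimately obtain t0 where
    min: "\<And>t. t \<in> {-1/\<delta>..1/\<delta>} \<Longrightarrow> cmod (fourier_transform f t0) \<le> cmod (fourier_transform f t)"
    using continuous_attains_inf[OF compact_Icc] by blast
  define c0 where "c0 = cmod (fourier_transform f t0)"
  have "c0 > 0"
    using ft unfolding c0_def by simp
  then have "c0 / 2 > 0"
    by simp
  then obtain F c where F: "finite F" "F \<subseteq> A"
    and approx: "(\<integral>x. cmod (translate f \<mu> x - (\<Sum>m\<in>F. c m * translate f (lam m) x)) \<partial>lborel) < c0 / 2"
    using span unfolding in_L1_closed_span_def by blast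
  define S where "S = insert \<mu> (lam ` F)"
  define a where "a \<nu> = (if \<nu> = \<mu> then 1 else - c (inv_into F lam \<nu>))" for \<nu>
  have F_lam: "inj_on lam F" "\<mu> \<notin> lam ` F"
    using lam F(2) by (auto intro: inj_on_subset)
  have S: "finite S" "separated \<delta> S" "\<mu> \<in> S"
    unfolding S_def using F by (auto intro!: separated_subset[OF \<delta>(2)])
  moreover have "a \<mu> = 1"
    by (simp add: a_def)
  ultimately obtain t where t: "t \<in> {-1/\<delta>..1/\<delta>}" and large: "1/2 < cmod (trig_poly S a t)"
    using ex_trig_poly_gt_half[OF \<delta>(1)] by blast
  have combination: "(\<Sum>\<nu>\<in>S. a \<nu> * translate f \<nu> x) = translate f \<mu> x - (\<Sum>m\<in>F. c m * translate f (lam m) x)" for x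
    unfolding S_def a_def by (rule sum_insert_image_coefficients[OF F(1) F_lam])
  have "c0 / 2 < c0 * cmod (trig_poly S a t)"
    using large \<open>c0 > 0\<close> by simp
  also have "\<dots> \<le> cmod (fourier_transform f t * trig_poly S a t)"
    using min[OF t] unfolding c0_def norm_mult by (intro mult_right_mono) auto
  also have "\<dots> = cmod (fourier_transform (\<lambda>x. \<Sum>\<nu>\<in>S. a \<nu> * translate f \<nu> x) t)"
    by (simp add: fourier_transform_sum_translates[OF f S(1)])
  also have "\<dots> \<le> (\<integral>x. cmod (\<Sum>\<nu>\<in>S. a \<nu> * translate f \<nu> x) \<partial>lborel)"
    by (rule norm_fourier_transform_le)
  also have "\<dots> = (\<integral>x. cmod (translate f \<mu> x - (\<Sum>m\<in>F. c m * translate f (lam m) x)) \<partial>lborel)"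
    unfolding combination ..
  finally show False
    using approx by simp
qed

theorem lemma3p3:
  fixes f :: "real \<Rightarrow> complex" and lam :: "nat \<Rightarrow> real"
  assumes "integrable lborel f"
    and "\<forall>t. fourier_transform f t \<noteq> 0"
    and "inj lam"
    and "uniformly_discrete (range lam)"
  shows "L1_minimal_system (\<lambda>n. translate f (lam n)) \<and>
         \<not> L1_fundamental (\<lambda>n. translate f (lam n))"
proof
  obtain \<delta> where \<delta>: "\<delta> > 0" "separated \<delta> (range lam)"
    using assms(4) unfolding uniformly_discrete_iff_separated by blast
  have not_in_span: "\<not> in_L1_closed_span (\<lambda>n. translate f (lam n)) A (translate f \<mu>)"
    if "\<mu> \<notin> lam ` A" "\<delta>' > 0" "separated \<delta>' (insert \<mu> (range lam))" for A \<mu> \<delta>'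
  proof (rule not_in_L1_closed_span_translates[OF assms(1) _ _ that(1,2)])
    show "inj_on lam A"
      using assms(3) by (rule inj_on_subset) simp
    show "separated \<delta>' (insert \<mu> (lam ` A))"
      using that(3) by (rule separated_subset) auto
  qed (use assms(2) in blast)
  show "L1_minimal_system (\<lambda>n. translate f (lam n))"
    unfolding L1_minimal_system_def
  proof
    fix n
    have "lam n \<notin> lam ` (UNIV - {n})"
      using assms(3) by (auto dest: injD)
    moreover have "insert (lam n) (range lam) = range lam"
      by blast
    ultimately show "\<not> in_L1_closed_span (\<lambda>n. translate f (lam n)) (UNIV - {n}) (translate f (lam n))"
      using not_in_span \<delta> by simp
  qed
  show "\<not> L1_fundamental (\<lambda>n. translate f (lam n))"
  proof
    assume "L1_fundamental (\<lambda>n. translate f (lam n))"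
    then have "in_L1_closed_span (\<lambda>n. translate f (lam n)) UNIV (translate f (lam 0 + \<delta> / 2))"
      unfolding L1_fundamental_def using integrable_translate[OF assms(1)] by blast
    moreover have "\<delta> / 2 > 0"
      using \<delta>(1) by simp
    ultimately show False
      using not_in_span separated_insert_offset[OF \<delta>(2,1) rangeI] by blast
  qed
qed

end
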